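(* Let $q$ be even and let $\mathcal U$ be a non-classical orthogonal Buekenhout–Metz unital with respect to $\ell_\infty$ in $\mathrm{PG}(2,q^2)$. Let $P$ be a point with $P\notin\mathcal U\cup\ell_\infty$. Then (1) the points of $\mathrm{pedal}(P)$ lie on the lines of a Baer pencil whose vertex is a point of $\ell_\infty$, and (2) $\mathrm{pedal}(P)$ is an arc.
   Context: Points of $\mathrm{PG}(2,q^2)$ have homogeneous coordinates $(x,y,z)$; $\ell_\infty$ is the line $z=0$. For $q$ even, an orthogonal Buekenhout–Metz unital with respect to $\ell_\infty$ is (up to a collineation fixing $\ell_\infty$) a set $\mathcal U_{\alpha\beta}=\{(x,\alpha x^2+\beta x^{q+1}+r,1): x\in\mathbb{F}_{q^2}, r\in\mathbb{F}_q\}\cup\{(0,1,0)\}$ where $\alpha,\beta\in\mathbb{F}_{q^2}$, $\beta\notin\mathbb{F}_q$ and $\alpha^{q+1}/(\beta^q+\beta)^2$ has absolute trace $0$ in $\mathbb{F}_q$ (originally defined as the unitals corresponding to an elliptic cone containing a spread line in the Bruck–Bose representation in $\mathrm{PG}(4,q)$ with respect to $\ell_\infty$); it is non-classical iff $\alpha\neq0$. A unital is a set of $q^3+1$ points meeting every line in $1$ or $q+1$ points; a tangent is a line meeting it in exactly one point. For $P$ not on the unital, the $q+1$ tangents through $P$ meet the unital in the feet of $P$, forming $\mathrm{pedal}(P)$. An arc is a point set meeting every line in at most $2$ points. A Baer subline is a set of $q+1$ points of a line projectively equivalent to $\{(a,b,0):(a,b)\in\mathbb{F}_q^2\setminus\{0\}\}$;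 a Baer pencil is the set of $q+1$ lines joining a vertex point to the points of a Baer subline. *)

theory Defs
  imports Main
begin

type_synonym 'a vec3 = "'a \<times> 'a \<times> 'a"

definition scale3 :: "'a::field \<Rightarrow> 'a vec3 \<Rightarrow> 'a vec3" where
  "scale3 c v = (c * fst v, c * fst (snd v), c * snd (snd v))"

definition inner3 :: "'a::field vec3 \<Rightarrow> 'a vec3 \<Rightarrow> 'a" where
  "inner3 l v = fst l * fst v + fst (snd l) * fst (snd v) + snd (snd l) * snd (snd v)"

definition proj_pt :: "'a::field vec3 \<Rightarrow> 'a vec3 set" where
  "proj_pt v = (\<lambda>c. scale3 c v) ` {c. c \<noteq> 0}"

definition points :: "'a::field vec3 set set" where
  "points = {proj_pt v | v. v \<noteq> (0,0,0)}"

definition proj_line :: "'a::field vec3 \<Rightarrow> 'a vec3 set set" where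
  "proj_line l = {proj_pt v | v. v \<noteq> (0,0,0) \<and> inner3 l v = 0}"

definition lines :: "'a::field vec3 set set set" where
  "lines = {proj_line l | l. l \<noteq> (0,0,0)}"

definition line_inf :: "'a::field vec3 set set" where
  "line_inf = proj_line (0,0,1)"

definition collineation :: "('a::field vec3 set \<Rightarrow> 'a vec3 set) \<Rightarrow> bool" where
  "collineation f \<longleftrightarrow> bij_betw f points points \<and> (\<forall>L\<in>lines. f ` L \<in> lines)"

definition subfield_q :: "nat \<Rightarrow> 'a::field set" where
  "subfield_q q = {r. r ^ q = r}"

definition abs_trace :: "nat \<Rightarrow> 'a::field \<Rightarrow> 'a" where
  "abs_trace h t = (\<Sum>i<h. t ^ (2 ^ i))"

definition BM_set :: "nat \<Rightarrow> 'a::field \<Rightarrow> 'a \<Rightarrow> 'a vec3 set set" where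
  "BM_set q \<alpha> \<beta> =
     {proj_pt (x, \<alpha> * x^2 + \<beta> * x^(q+1) + r, 1) | x r. r \<in> subfield_q q}
     \<union> {proj_pt (0,1,0)}"

definition nonclassical_orth_BM_unital :: "nat \<Rightarrow> nat \<Rightarrow> 'a::field vec3 set set \<Rightarrow> bool" where
  "nonclassical_orth_BM_unital q h U \<longleftrightarrow>
     (\<exists>f \<alpha> \<beta>. collineation f \<and> f ` line_inf = line_inf \<and>
        \<beta> \<notin> subfield_q q \<and> \<alpha> \<noteq> 0 \<and>
        abs_trace h (\<alpha> ^ (q+1) / (\<beta> ^ q + \<beta>) ^ 2) = 0 \<and>
        U = f ` BM_set q \<alpha> \<beta>)"

definition pedal :: "'a::field vec3 set set \<Rightarrow> 'a vec3 set \<Rightarrow> 'a vec3 set set" where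
  "pedal U P = {Q. \<exists>L\<in>lines. P \<in> L \<and> L \<inter> U = {Q}}"

definition is_arc :: "'a::field vec3 set set \<Rightarrow> bool" where
  "is_arc S \<longleftrightarrow> S \<subseteq> points \<and> (\<forall>L\<in>lines. card (L \<inter> S) \<le> 2)"

definition std_baer_subline :: "nat \<Rightarrow> 'a::field vec3 set set" where
  "std_baer_subline q =
     {proj_pt (a, b, 0) | a b. a \<in> subfield_q q \<and> b \<in> subfield_q q \<and> (a, b) \<noteq> (0, 0)}"

definition baer_subline :: "nat \<Rightarrow> 'a::field vec3 set set \<Rightarrow> bool" where
  "baer_subline q B \<longleftrightarrow> (\<exists>f. collineation f \<and> B = f ` std_baer_subline q)"

definition baer_pencil :: "nat \<Rightarrow> 'a::field vec3 set \<Rightarrow> 'a vec3 set set set \<Rightarrow> bool" where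
  "baer_pencil q V Ls \<longleftrightarrow> V \<in> points \<and>
     (\<exists>B. baer_subline q B \<and> (\<forall>m\<in>lines. B \<subseteq> m \<longrightarrow> V \<notin> m) \<and>
          Ls = {L \<in> lines. V \<in> L \<and> (\<exists>Y\<in>B. Y \<in> L)})"

end

theory Submission
  imports Defs "HOL-Computational_Algebra.Primes"
begin

(* A collineation fixing line_inf reduces the theorem to U = U_{\<alpha>\<beta>} and P = (a, b, 1).
   Put \<delta> = \<beta>^q + \<beta>, a nonzero element of GF(q), and Q(u) = \<alpha> u^2 + \<alpha>^q u^(2q) + \<delta> u^(q+1);
   the trace condition says exactly that the GF(q)-quadratic form Q is anisotropic. A tangent
   through P is a line y = m x + c whose only point on U is (x0, y0, 1), so x0 is the only x
   with m x + c + \<alpha> x^2 + \<beta> x^(q+1) in GF(q); anisotropy of Q forces m = \<delta> x0^q. Hence every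
   foot is (a + u, b + \<delta> a^q u + \<delta> u^(q+1), 1) with Q(u) = Q(a) + b + b^q.

   Such a point lies on the line joining V = (1, \<delta> a^q, 0) to (0, b + \<delta> t, 1), where
   t = a^(q+1) + u^(q+1) lies in GF(q); the points (0, b + \<delta> t, 1) form a Baer subline of
   the y-axis. Three collinear feet u1, u2, u3 satisfy \<delta> u^(q+1) + s u + k = 0 and Q(u) = const;
   this forces u3 - u1 = t (u2 - u1) with t in GF(q), and then t^2 + t = 0, a contradiction. *)

section \<open>Homogeneous coordinates\<close>

lemma scale3_simp [simp]: "scale3 c (x, y, z) = (c * x, c * y, c * z)"
  by (simp add: scale3_def)

lemma inner3_simp [simp]: "inner3 (l1, l2, l3) (x, y, z) = l1 * x + l2 * y + l3 * z"
  by (simp add: inner3_def)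

lemma inner3_scale3: "inner3 l (scale3 c v) = c * inner3 l v"
  by (cases l, cases v) (simp add: algebra_simps)

lemma proj_pt_self: "v \<in> proj_pt v"
  unfolding proj_pt_def by (rule image_eqI[where x = 1]) (auto simp: scale3_def)

lemma proj_pt_eqD: "proj_pt v = proj_pt w \<Longrightarrow> \<exists>c. c \<noteq> 0 \<and> v = scale3 c w"
  using proj_pt_self[of v] unfolding proj_pt_def by auto

lemma proj_pt_scale3:
  fixes v :: "'a::field vec3"
  assumes "c \<noteq> 0"
  shows "proj_pt (scale3 c v) = proj_pt v"
proof -
  obtain x y z where v: "v = (x, y, z)" by (cases v)
  show ?thesis
  proof
    show "proj_pt (scale3 c v) \<subseteq> proj_pt v"
      unfolding proj_pt_def v using assms
      by (auto intro!: image_eqI[where x = "_ * c"] simp: mult.assoc)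
    show "proj_pt v \<subseteq> proj_pt (scale3 c v)"
      unfolding proj_pt_def v using assms
      by (auto intro!: image_eqI[where x = "_ / c"] simp: mult.assoc)
  qed
qed

lemma image_proj_pt_linear:
  assumes "\<And>c v. M (scale3 c v) = scale3 c (M v)"
  shows "M ` proj_pt v = proj_pt (M v)"
  unfolding proj_pt_def image_image assms by simp

lemma proj_pt_affine_eq_iff:
  fixes x :: "'a::field"
  shows "proj_pt (x, y, 1) = proj_pt (x', y', 1) \<longleftrightarrow> x = x' \<and> y = y'"
  using proj_pt_eqD[of "(x, y, 1)" "(x', y', 1)"] by auto

lemma proj_pt_affine_neq_inf:
  fixes x :: "'a::field"
  shows "proj_pt (x, y, 1) \<noteq> proj_pt (x', y', 0)"
  using proj_pt_eqD[of "(x, y, 1)" "(x', y', 0)"] by auto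

lemma proj_pt_in_points: "v \<noteq> (0, 0, 0) \<Longrightarrow> proj_pt v \<in> points"
  unfolding points_def by blast

lemma proj_pt_in_proj_line_iff:
  fixes v :: "'a::field vec3"
  assumes "v \<noteq> (0, 0, 0)"
  shows "proj_pt v \<in> proj_line l \<longleftrightarrow> inner3 l v = 0"
proof
  assume "proj_pt v \<in> proj_line l"
  then obtain w where w: "proj_pt v = proj_pt w" "inner3 l w = 0"
    unfolding proj_line_def by auto
  then show "inner3 l v = 0"
    using proj_pt_eqD[OF w(1)] by (auto simp: inner3_scale3)
next
  assume "inner3 l v = 0"
  then show "proj_pt v \<in> proj_line l"
    unfolding proj_line_def using assms by blast
qed

lemma lines_subset_points: "L \<in> lines \<Longrightarrow> L \<subseteq> points"
  unfolding lines_def proj_line_def points_def by auto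

lemma affine_point_cases:
  fixes P :: "'a::field vec3 set"
  assumes "P \<in> points" "P \<notin> line_inf"
  obtains a b where "P = proj_pt (a, b, 1)"
proof -
  obtain x y z where P: "P = proj_pt (x, y, z)" "(x, y, z) \<noteq> (0, 0, 0)"
    using assms(1) unfolding points_def by auto
  have "z \<noteq> 0"
    using assms(2) P proj_pt_in_proj_line_iff[OF P(2), of "(0, 0, 1)"]
    unfolding line_inf_def by auto
  then have "P = proj_pt (x / z, y / z, 1)"
    using P(1) proj_pt_scale3[of "1 / z" "(x, y, z)"] by simp
  then show thesis by (rule that)
qed

lemma vertical_line_through:
  fixes a :: "'a::field"
  assumes "L \<in> lines" "proj_pt (0, 1, 0) \<in> L" "proj_pt (a, b, 1) \<in> L"
  shows "proj_pt (a, y, 1) \<in> L"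
proof -
  obtain l1 l2 l3 where L: "L = proj_line (l1, l2, l3)"
    using assms(1) unfolding lines_def by auto
  have "l2 = 0" "l1 * a + l3 = 0"
    using assms(2,3) unfolding L by (simp_all add: proj_pt_in_proj_line_iff)
  then show ?thesis
    unfolding L by (simp add: proj_pt_in_proj_line_iff)
qed

lemma nonvertical_line_graph:
  fixes L :: "'a::field vec3 set set"
  assumes "L \<in> lines" "proj_pt (0, 1, 0) \<notin> L"
  obtains m c where "\<And>x y. proj_pt (x, y, 1) \<in> L \<longleftrightarrow> y = m * x + c"
proof -
  obtain l1 l2 l3 where L: "L = proj_line (l1, l2, l3)"
    using assms(1) unfolding lines_def by auto
  have "l2 \<noteq> 0"
    using assms(2) proj_pt_in_proj_line_iff[of "(0, 1, 0)" "(l1, l2, l3)"] L by auto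
  then have "proj_pt (x, y, 1) \<in> L \<longleftrightarrow> y = (- l1 / l2) * x + (- l3 / l2)" for x y
    using proj_pt_in_proj_line_iff[of "(x, y, 1)" "(l1, l2, l3)"] L
    by (auto simp: field_simps eq_neg_iff_add_eq_0 add.commute)
  then show thesis by (rule that)
qed

lemma line_through_y_axis_points_x_eq_0:
  fixes b :: "'a::field"
  assumes "L \<in> lines" "proj_pt (0, 1, 0) \<in> L" "proj_pt (0, b, 1) \<in> L"
    and "proj_pt (x, y, z) \<in> L" "(x, y, z) \<noteq> (0, 0, 0)"
  shows "x = 0"
proof -
  obtain l1 l2 l3 where L: "L = proj_line (l1, l2, l3)" "(l1, l2, l3) \<noteq> (0, 0, 0)"
    using assms(1) unfolding lines_def by auto
  have "l2 = 0" "l3 = 0"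
    using assms(2,3) unfolding L(1) by (simp_all add: proj_pt_in_proj_line_iff)
  moreover have "l1 * x + l2 * y + l3 * z = 0"
    using assms(4,5) unfolding L(1) by (simp add: proj_pt_in_proj_line_iff)
  ultimately show ?thesis
    using L(2) by simp
qed

section \<open>Collineations\<close>

lemma collineation_inj_on: "collineation f \<Longrightarrow> inj_on f points"
  unfolding collineation_def bij_betw_def by auto

lemma collineation_image_points: "collineation f \<Longrightarrow> f ` points = points"
  unfolding collineation_def bij_betw_def by auto

lemma collineation_comp:
  assumes "collineation f" "collineation g"
  shows "collineation (f \<circ> g)"
  using assms bij_betw_trans unfolding collineation_def by (fastforce simp: image_comp)

lemma collineation_line_preimage:
  fixes f :: "'a::{field,finite} vec3 set \<Rightarrow> 'a vec3 set"
  assumes f: "collineation f" and L: "L \<in> lines"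
  obtains L0 where "L0 \<in> lines" "L = f ` L0"
proof -
  have "inj_on ((`) f) lines"
    using inj_on_image_eq_iff[OF collineation_inj_on[OF f]] lines_subset_points
    by (auto intro!: inj_onI)
  moreover have "(`) f ` lines \<subseteq> lines"
    using f unfolding collineation_def by auto
  ultimately have "(`) f ` lines = lines"
    by (simp add: endo_inj_surj)
  then show thesis using L that by (metis imageE)
qed

lemma collineation_mem_image_iff:
  assumes "collineation f" "X \<in> points" "A \<subseteq> points"
  shows "f X \<in> f ` A \<longleftrightarrow> X \<in> A"
  using inj_on_image_mem_iff[OF collineation_inj_on] assms by blast

lemma image_proj_pt_set_linear:
  fixes M Mi :: "'a::field vec3 \<Rightarrow> 'a vec3"
  assumes scale: "\<And>c v. M (scale3 c v) = scale3 c (M v)"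
    and left_inv: "\<And>v. Mi (M v) = v" and right_inv: "\<And>v. M (Mi v) = v"
  shows "(`) M ` {proj_pt v | v. v \<noteq> (0, 0, 0) \<and> P v}
    = {proj_pt w | w. w \<noteq> (0, 0, 0) \<and> P (Mi w)}"
proof -
  have M0: "M (0, 0, 0) = (0, 0, 0)"
    using scale[of 0 "(0, 0, 0)"] by (cases "M (0, 0, 0)") simp
  have "(`) M ` {proj_pt v | v. v \<noteq> (0, 0, 0) \<and> P v}
      = {proj_pt (M v) | v. v \<noteq> (0, 0, 0) \<and> P v}"
    using image_proj_pt_linear[OF scale] by blast
  also have "\<dots> = {proj_pt w | w. w \<noteq> (0, 0, 0) \<and> P (Mi w)}"
  proof (intro equalityI subsetI)
    fix Y assume "Y \<in> {proj_pt (M v) | v. v \<noteq> (0, 0, 0) \<and> P v}"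
    then obtain v where "Y = proj_pt (M v)" "v \<noteq> (0, 0, 0)" "P v"
      by blast
    moreover have "M v \<noteq> (0, 0, 0)" "P (Mi (M v))"
      using M0 left_inv \<open>v \<noteq> (0, 0, 0)\<close> \<open>P v\<close> by metis+
    ultimately show "Y \<in> {proj_pt w | w. w \<noteq> (0, 0, 0) \<and> P (Mi w)}"
      by blast
  next
    fix X assume "X \<in> {proj_pt w | w. w \<noteq> (0, 0, 0) \<and> P (Mi w)}"
    then obtain w where "X = proj_pt (M (Mi w))" "w \<noteq> (0, 0, 0)" "P (Mi w)"
      using right_inv by auto
    moreover have "Mi w \<noteq> (0, 0, 0)"
      using M0 right_inv \<open>w \<noteq> (0, 0, 0)\<close> by metis
    ultimately show "X \<in> {proj_pt (M v) | v. v \<noteq> (0, 0, 0) \<and> P v}"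
      by blast
  qed
  finally show ?thesis .
qed

text \<open>\<open>Mt\<close> is the inverse transpose of \<open>M\<close>, acting on dual coordinates.\<close>

lemma collineation_linear:
  fixes M Mi Mt :: "'a::field vec3 \<Rightarrow> 'a vec3"
  assumes scale: "\<And>c v. M (scale3 c v) = scale3 c (M v)"
    and left_inv: "\<And>v. Mi (M v) = v" and right_inv: "\<And>v. M (Mi v) = v"
    and transpose: "\<And>l v. inner3 l (Mi v) = inner3 (Mt l) v"
  shows "collineation ((`) M)"
proof -
  note img_points = image_proj_pt_set_linear[OF scale left_inv right_inv]
  have "bij_betw ((`) M) points points"
  proof (rule bij_betw_imageI)
    show "inj_on ((`) M) points"
      by (rule inj_onI) (metis left_inv image_inv_f_f injI)
    show "(`) M ` points = points"
      using img_points[of "\<lambda>_. True"] unfolding points_def by simp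
  qed
  moreover have "(`) M ` L \<in> lines" if L: "L \<in> lines" for L
  proof -
    obtain l where l: "L = proj_line l" "l \<noteq> (0, 0, 0)"
      using L unfolding lines_def by blast
    have "Mt l \<noteq> (0, 0, 0)"
    proof
      assume "Mt l = (0, 0, 0)"
      then have "inner3 l u = 0" for u
        using transpose[of l "M u"] left_inv by (simp add: inner3_def)
      from this[of "(1, 0, 0)"] this[of "(0, 1, 0)"] this[of "(0, 0, 1)"] show False
        using l(2) by (cases l) simp
    qed
    moreover have "(`) M ` proj_line l = proj_line (Mt l)"
      using img_points[of "\<lambda>v. inner3 l v = 0"] unfolding proj_line_def transpose .
    ultimately show ?thesis
      unfolding lines_def l(1) by blast
  qed
  ultimately show ?thesis
    unfolding collineation_def by blast
qed

lemma pedal_collineation_image: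
  fixes f :: "'a::{field,finite} vec3 set \<Rightarrow> 'a vec3 set"
  assumes f: "collineation f" and U: "U \<subseteq> points" and P: "P \<in> points"
  shows "pedal (f ` U) (f P) \<subseteq> f ` pedal U P"
proof
  fix Q assume "Q \<in> pedal (f ` U) (f P)"
  then obtain L where L: "L \<in> lines" "f P \<in> L" "L \<inter> f ` U = {Q}"
    unfolding pedal_def by blast
  obtain L0 where L0: "L0 \<in> lines" "L = f ` L0"
    using collineation_line_preimage[OF f L(1)] .
  have L0_points: "L0 \<subseteq> points"
    using lines_subset_points[OF L0(1)] .
  obtain Q0 where Q0: "Q0 \<in> U" "Q = f Q0"
    using L(3) by blast
  have "f ` (L0 \<inter> U) = f ` {Q0}"
    using L(3) L0(2) Q0 inj_on_image_Int[OF collineation_inj_on[OF f] L0_points U] by simp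
  moreover have "L0 \<inter> U \<subseteq> points" "{Q0} \<subseteq> points"
    using U Q0(1) by auto
  ultimately have "L0 \<inter> U = {Q0}"
    using inj_on_image_eq_iff[OF collineation_inj_on[OF f]] by metis
  moreover have "P \<in> L0"
    using L(2) L0 collineation_mem_image_iff[OF f P L0_points] by simp
  ultimately show "Q \<in> f ` pedal U P"
    unfolding pedal_def using L0(1) Q0 by blast
qed

lemma is_arc_subset:
  fixes S T :: "'a::{field,finite} vec3 set set"
  assumes "is_arc T" "S \<subseteq> T"
  shows "is_arc S"
  using assms card_mono[OF finite, of "_ \<inter> S" "_ \<inter> T"] unfolding is_arc_def
  by (meson Int_mono order_refl order_trans)

lemma is_arc_collineation_image:
  fixes f :: "'a::{field,finite} vec3 set \<Rightarrow> 'a vec3 set"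
  assumes f: "collineation f" and S: "is_arc S"
  shows "is_arc (f ` S)"
  unfolding is_arc_def
proof (intro conjI ballI)
  have "S \<subseteq> points"
    using S unfolding is_arc_def by blast
  then show "f ` S \<subseteq> points"
    using collineation_image_points[OF f] by blast
  fix L :: "'a vec3 set set" assume "L \<in> lines"
  then obtain L0 where L0: "L0 \<in> lines" "L = f ` L0"
    using collineation_line_preimage[OF f] by blast
  have "card (L \<inter> f ` S) = card (f ` (L0 \<inter> S))"
    using L0 inj_on_image_Int[OF collineation_inj_on[OF f] lines_subset_points \<open>S \<subseteq> points\<close>]
    by simp
  also have "\<dots> \<le> card (L0 \<inter> S)"
    by (rule card_image_le) (rule finite)
  also have "\<dots> \<le> 2"
    using S L0(1) unfolding is_arc_def by blast
  finally show "card (L \<inter> f ` S) \<le> 2" .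
qed

lemma baer_subline_subset_points:
  assumes "baer_subline q B"
  shows "B \<subseteq> points"
proof -
  obtain f where f: "collineation f" and B: "B = f ` std_baer_subline q"
    using assms unfolding baer_subline_def by blast
  have "std_baer_subline q \<subseteq> points"
    unfolding std_baer_subline_def by (auto intro: proj_pt_in_points)
  then show ?thesis
    using B collineation_image_points[OF f] by blast
qed

lemma baer_pencil_collineation_image:
  fixes f :: "'a::{field,finite} vec3 set \<Rightarrow> 'a vec3 set"
  assumes f: "collineation f" and pencil: "baer_pencil q V Ls"
  shows "baer_pencil q (f V) ((`) f ` Ls)"
proof -
  obtain B where V: "V \<in> points" and B: "baer_subline q B"
    and V_off: "\<forall>m\<in>lines. B \<subseteq> m \<longrightarrow> V \<notin> m"
    and Ls: "Ls = {L \<in> lines. V \<in> L \<and> (\<exists>Y\<in>B. Y \<in> L)}"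
    using pencil unfolding baer_pencil_def by blast
  have B_points: "B \<subseteq> points"
    using baer_subline_subset_points[OF B] .
  have mem_iff: "X \<in> points \<Longrightarrow> L0 \<in> lines \<Longrightarrow> f X \<in> f ` L0 \<longleftrightarrow> X \<in> L0" for X L0
    using collineation_mem_image_iff[OF f] lines_subset_points by blast
  have "f V \<in> points"
    using V collineation_image_points[OF f] by blast
  moreover have "baer_subline q (f ` B)"
    using B collineation_comp[OF f] unfolding baer_subline_def by (metis image_comp)
  moreover have "f V \<notin> m" if m: "m \<in> lines" "f ` B \<subseteq> m" for m
  proof -
    obtain m0 where m0: "m0 \<in> lines" "m = f ` m0"
      using collineation_line_preimage[OF f m(1)] .
    have "B \<subseteq> m0"
      using m(2) m0 mem_iff B_points by blast
    then show ?thesis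
      using V_off m0 mem_iff[OF V] by blast
  qed
  moreover have "(`) f ` Ls = {L \<in> lines. f V \<in> L \<and> (\<exists>Y\<in>f ` B. Y \<in> L)}"
  proof (intro equalityI subsetI)
    fix L assume "L \<in> (`) f ` Ls"
    then show "L \<in> {L \<in> lines. f V \<in> L \<and> (\<exists>Y\<in>f ` B. Y \<in> L)}"
      using f unfolding Ls collineation_def by blast
  next
    fix L assume L: "L \<in> {L \<in> lines. f V \<in> L \<and> (\<exists>Y\<in>f ` B. Y \<in> L)}"
    then obtain L0 where L0: "L0 \<in> lines" "L = f ` L0"
      using collineation_line_preimage[OF f] by blast
    have "L0 \<in> Ls"
      using L L0 mem_iff V B_points unfolding Ls by blast
    then show "L \<in> (`) f ` Ls"
      using L0(2) by blast
  qed
  ultimately show ?thesis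
    unfolding baer_pencil_def by blast
qed

definition on_inf_baer_pencil :: "nat \<Rightarrow> 'a::field vec3 set set \<Rightarrow> bool" where
  "on_inf_baer_pencil q S \<longleftrightarrow> (\<exists>V Ls. V \<in> line_inf \<and> baer_pencil q V Ls \<and> S \<subseteq> \<Union>Ls)"

lemma on_inf_baer_pencil_subset:
  "on_inf_baer_pencil q T \<Longrightarrow> S \<subseteq> T \<Longrightarrow> on_inf_baer_pencil q S"
  unfolding on_inf_baer_pencil_def by blast

lemma on_inf_baer_pencil_collineation_image:
  fixes f :: "'a::{field,finite} vec3 set \<Rightarrow> 'a vec3 set"
  assumes f: "collineation f" "f ` line_inf = line_inf" and S: "on_inf_baer_pencil q S"
  shows "on_inf_baer_pencil q (f ` S)"
proof -
  obtain V Ls where "V \<in> line_inf" "baer_pencil q V Ls" "S \<subseteq> \<Union>Ls"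
    using S unfolding on_inf_baer_pencil_def by blast
  moreover have "f ` S \<subseteq> \<Union>((`) f ` Ls)"
    using \<open>S \<subseteq> \<Union>Ls\<close> by blast
  moreover have "f V \<in> line_inf"
    using \<open>V \<in> line_inf\<close> f(2) by (metis imageI)
  ultimately show ?thesis
    unfolding on_inf_baer_pencil_def using baer_pencil_collineation_image[OF f(1)] by metis
qed

lemma baer_subline_on_y_axis:
  fixes \<delta> b :: "'a::field"
  assumes "0 < q" "\<delta> \<noteq> 0"
  obtains B where "baer_subline q B" "proj_pt (0, 1, 0) \<in> B"
    "\<And>t. t \<in> subfield_q q \<Longrightarrow> proj_pt (0, b + \<delta> * t, 1) \<in> B"
proof -
  define M :: "'a vec3 \<Rightarrow> 'a vec3" where "M = (\<lambda>(x, y, z). (z, b * x + \<delta> * y, x))"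
  define Mi :: "'a vec3 \<Rightarrow> 'a vec3" where "Mi = (\<lambda>(x, y, z). (z, (y - b * z) / \<delta>, x))"
  define Mt :: "'a vec3 \<Rightarrow> 'a vec3" where "Mt = (\<lambda>(l1, l2, l3). (l3, l2 / \<delta>, l1 - l2 * b / \<delta>))"
  have scale: "M (scale3 c v) = scale3 c (M v)" for c v
    unfolding M_def by (cases v) (simp add: algebra_simps)
  have "collineation ((`) M)"
  proof (rule collineation_linear[OF scale])
    show "Mi (M v) = v" "M (Mi v) = v" for v
      unfolding M_def Mi_def using assms(2) by (cases v, simp)+
    show "inner3 l (Mi v) = inner3 (Mt l) v" for l v
      unfolding Mi_def Mt_def using assms(2) by (cases l, cases v) (simp add: field_simps)
  qed
  then have "baer_subline q ((`) M ` std_baer_subline q)"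
    unfolding baer_subline_def by blast
  moreover have std: "proj_pt (x, y, 0) \<in> std_baer_subline q"
    if "x \<in> subfield_q q" "y \<in> subfield_q q" "(x, y) \<noteq> (0, 0)" for x y :: 'a
    unfolding std_baer_subline_def using that by blast
  have subfield_0_1: "0 \<in> subfield_q q" "1 \<in> subfield_q q"
    unfolding subfield_q_def using assms(1) by auto
  have "M ` proj_pt (0, 1, 0) = proj_pt (0, 1, 0)"
    unfolding image_proj_pt_linear[OF scale] using proj_pt_scale3[OF assms(2), of "(0, 1, 0)"]
    by (simp add: M_def)
  then have "proj_pt (0, 1, 0) \<in> (`) M ` std_baer_subline q"
    using std[OF subfield_0_1(1,2)] by (metis image_eqI zero_neq_one prod.inject)
  moreover have "proj_pt (0, b + \<delta> * t, 1) \<in> (`) M ` std_baer_subline q"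
    if "t \<in> subfield_q q" for t
  proof (rule image_eqI)
    show "proj_pt (0, b + \<delta> * t, 1) = M ` proj_pt (1, t, 0)"
      unfolding image_proj_pt_linear[OF scale] by (simp add: M_def)
    show "proj_pt (1, t, 0) \<in> std_baer_subline q"
      using std[OF subfield_0_1(2) that] by simp
  qed
  ultimately show thesis
    by (rule that)
qed

section \<open>Finite fields of characteristic 2\<close>

lemma power2_power_commute: "((x :: 'a::monoid_mult) ^ 2) ^ n = (x ^ n) ^ 2"
  by (simp add: power_mult[symmetric] mult.commute)

lemma finite_field_power_card:
  fixes x :: "'a::{field,finite}"
  shows "x ^ card (UNIV :: 'a set) = x"
proof (cases "x = 0")
  case False
  have "x * (\<Prod>y\<in>UNIV-{0}. x * y) = x * x ^ (card (UNIV :: 'a set) - 1) * \<Prod>(UNIV-{0})"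
    by (simp add: prod.distrib mult_ac)
  also have "x * x ^ (card (UNIV :: 'a set) - 1) = x ^ card (UNIV :: 'a set)"
    using finite_UNIV_card_ge_0[where ?'a = 'a] by (simp flip: power_Suc)
  also have "(\<Prod>y\<in>UNIV-{0}. x * y) = (\<Prod>y\<in>UNIV-{0}. y)"
    by (rule prod.reindex_bij_witness[of _ "\<lambda>y. y / x" "\<lambda>y. x * y"]) (use False in auto)
  finally show ?thesis
    by simp
qed (use finite_UNIV_card_ge_0[where ?'a = 'a] in auto)

lemma CHAR_2_numeral_Bit0:
  assumes "CHAR('a::comm_ring_1) = 2"
  shows "(numeral (Num.Bit0 n) :: 'a) = 0"
proof -
  have "(2::'a) = 0"
    using of_nat_CHAR[where ?'a = 'a] assms by simp
  then show ?thesis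
    by (metis mult_2 mult_zero_left numeral_Bit0)
qed

lemma CHAR_2_add_self:
  fixes x :: "'a::ring_1"
  assumes "CHAR('a) = 2"
  shows "x + x = 0"
  using uminus_CHAR_2[OF assms, of x] by (simp add: add_eq_0_iff2)

lemma CHAR_2_eq_iff_add_eq_0:
  fixes x y :: "'a::ring_1"
  assumes "CHAR('a) = 2"
  shows "x = y \<longleftrightarrow> x + y = 0"
  by (metis assms minus_CHAR_2 right_minus_eq)

lemma CHAR_2_add_power_2_power:
  fixes x y :: "'a::comm_ring_1"
  assumes "CHAR('a) = 2"
  shows "(x + y) ^ 2 ^ k = x ^ 2 ^ k + y ^ 2 ^ k"
  using freshmans_dream'[of "2 ^ k" k x y] assms by simp

lemma CHAR_2_trace_telescope:
  fixes z :: "'a::comm_ring_1"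
  assumes "CHAR('a) = 2"
  shows "(\<Sum>i<k. (z ^ 2 + z) ^ 2 ^ i) = z ^ 2 ^ k + z"
proof (induction k)
  case 0
  then show ?case
    using CHAR_2_add_self[OF assms, of z] by simp
next
  case (Suc k)
  have "(z ^ 2 + z) ^ 2 ^ k = z ^ 2 ^ Suc k + z ^ 2 ^ k"
    by (simp add: CHAR_2_add_power_2_power[OF assms] power_mult[symmetric] mult.commute)
  then have "(\<Sum>i<Suc k. (z ^ 2 + z) ^ 2 ^ i) = z ^ 2 ^ Suc k + z + (z ^ 2 ^ k + z ^ 2 ^ k)"
    using Suc.IH by (simp add: algebra_simps)
  then show ?case
    using CHAR_2_add_self[OF assms] by simp
qed

section \<open>Buekenhout--Metz sets\<close>

lemma BM_set_subset_points: "BM_set q \<alpha> \<beta> \<subseteq> points"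
  unfolding BM_set_def by (auto intro: proj_pt_in_points)

lemma BM_set_affine_mem_iff:
  fixes x y :: "'a::field"
  shows "proj_pt (x, y, 1) \<in> BM_set q \<alpha> \<beta> \<longleftrightarrow>
    y - \<alpha> * x ^ 2 - \<beta> * x ^ (q + 1) \<in> subfield_q q"
proof
  assume "proj_pt (x, y, 1) \<in> BM_set q \<alpha> \<beta>"
  moreover have "proj_pt (x, y, 1) \<noteq> proj_pt (0, 1, 0)"
    by (rule proj_pt_affine_neq_inf)
  ultimately obtain x' r where "r \<in> subfield_q q"
    and "proj_pt (x, y, 1) = proj_pt (x', \<alpha> * x' ^ 2 + \<beta> * x' ^ (q + 1) + r, 1)"
    unfolding BM_set_def by auto
  then show "y - \<alpha> * x ^ 2 - \<beta> * x ^ (q + 1) \<in> subfield_q q"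
    unfolding proj_pt_affine_eq_iff by auto
next
  assume "y - \<alpha> * x ^ 2 - \<beta> * x ^ (q + 1) \<in> subfield_q q"
  then show "proj_pt (x, y, 1) \<in> BM_set q \<alpha> \<beta>"
    unfolding BM_set_def
    by (intro UnI1 CollectI exI[where x = x] exI[where x = "y - \<alpha> * x ^ 2 - \<beta> * x ^ (q + 1)"])
      simp
qed

lemma BM_tangent_not_vertical:
  fixes a b :: "'a::field"
  assumes "0 < q" and L: "L \<in> lines" "proj_pt (a, b, 1) \<in> L" "L \<inter> BM_set q \<alpha> \<beta> = {Q}"
  shows "proj_pt (0, 1, 0) \<notin> L"
proof
  assume inf: "proj_pt (0, 1, 0) \<in> L"
  have "proj_pt (a, \<alpha> * a ^ 2 + \<beta> * a ^ (q + 1), 1) \<in> L"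
    using vertical_line_through[OF L(1) inf L(2)] .
  moreover have "proj_pt (a, \<alpha> * a ^ 2 + \<beta> * a ^ (q + 1), 1) \<in> BM_set q \<alpha> \<beta>"
    using \<open>0 < q\<close> by (simp add: BM_set_affine_mem_iff subfield_q_def)
  ultimately have "proj_pt (a, \<alpha> * a ^ 2 + \<beta> * a ^ (q + 1), 1) = Q"
    using L(3) by blast
  moreover have "proj_pt (0, 1, 0) = Q"
    using inf L(3) unfolding BM_set_def by blast
  ultimately show False
    using proj_pt_affine_neq_inf by metis
qed

text \<open>With \<open>\<delta> = \<beta>\<^sup>q + \<beta>\<close>, \<open>bm_form q \<alpha> \<delta>\<close> is the quadratic form over \<open>GF(q)\<close> attached to
  \<open>U\<^sub>\<alpha>\<^sub>\<beta>\<close>; the trace condition on \<open>\<alpha>\<^sup>q\<^sup>+\<^sup>1/\<delta>\<^sup>2\<close> is its anisotropy. The feet of \<open>(a, b, 1)\<close>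
  are found among the points \<open>foot_pt q \<delta> a b u\<close>.\<close>

definition bm_form :: "nat \<Rightarrow> 'a::field \<Rightarrow> 'a \<Rightarrow> 'a \<Rightarrow> 'a" where
  "bm_form q \<alpha> \<delta> u = \<alpha> * u ^ 2 + \<alpha> ^ q * (u ^ q) ^ 2 + \<delta> * (u * u ^ q)"

definition bm_offset :: "nat \<Rightarrow> 'a::field \<Rightarrow> 'a \<Rightarrow> 'a \<Rightarrow> 'a \<Rightarrow> 'a \<Rightarrow> 'a" where
  "bm_offset q \<alpha> \<beta> m c x = m * x + c + \<alpha> * x ^ 2 + \<beta> * (x * x ^ q)"

definition foot_pt :: "nat \<Rightarrow> 'a::field \<Rightarrow> 'a \<Rightarrow> 'a \<Rightarrow> 'a \<Rightarrow> 'a vec3 set" where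
  "foot_pt q \<delta> a b u = proj_pt (a + u, b + \<delta> * a ^ q * u + \<delta> * (u * u ^ q), 1)"

lemma foot_pt_in_proj_line_iff:
  "foot_pt q \<delta> a b u \<in> proj_line (l1, l2, l3)
    \<longleftrightarrow> l1 * (a + u) + l2 * (b + \<delta> * a ^ q * u + \<delta> * (u * u ^ q)) + l3 = 0"
  unfolding foot_pt_def by (simp add: proj_pt_in_proj_line_iff)

lemma foot_pt_in_nonvertical_line_iff:
  fixes l2 :: "'a::field"
  assumes "l2 \<noteq> 0"
  shows "foot_pt q \<delta> a b u \<in> proj_line (l1, l2, l3)
    \<longleftrightarrow> \<delta> * (u * u ^ q) + (l1 / l2 + \<delta> * a ^ q) * u + ((l1 * a + l3) / l2 + b) = 0"
proof -
  have "\<delta> * (u * u ^ q) + (l1 / l2 + \<delta> * a ^ q) * u + ((l1 * a + l3) / l2 + b)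
      = (l1 * (a + u) + l2 * (b + \<delta> * a ^ q * u + \<delta> * (u * u ^ q)) + l3) / l2"
    using assms by (simp add: field_simps)
  then show ?thesis
    using assms by (simp add: foot_pt_in_proj_line_iff)
qed

section \<open>The field \<open>GF(q\<^sup>2)\<close> for even \<open>q\<close>\<close>

context
  fixes q h :: nat
  assumes q_def: "q = 2 ^ h" and h_pos: "1 \<le> h"
    and card_field: "card (UNIV :: 'a::{field,finite} set) = q ^ 2"
begin

lemma q_pos: "0 < q"
  using q_def by simp

lemma CHAR_eq_2: "CHAR('a) = 2"
proof -
  have "(- 1 :: 'a) = (- 1) ^ (q ^ 2)"
    using finite_field_power_card[of "- 1 :: 'a"] unfolding card_field by (rule sym)
  also have "\<dots> = 1"
    by (rule neg_one_even_power) (use q_def h_pos in \<open>simp add: even_power\<close>)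
  finally have "(2 :: 'a) = 0"
    by (metis add.right_inverse one_add_one)
  then have "CHAR('a) dvd 2"
    using of_nat_eq_0_iff_char_dvd[of 2, where ?'a = 'a] by simp
  moreover have "CHAR('a) \<noteq> 0"
    using \<open>CHAR('a) dvd 2\<close> by (rule contrapos_pn) simp
  ultimately have "CHAR('a) \<le> 2" "CHAR('a) \<noteq> 0"
    by (simp_all add: dvd_imp_le)
  then show ?thesis
    using CHAR_not_1[where ?'a = 'a] by linarith
qed

text \<open>Identities in characteristic 2 are proved by moving everything to one side with
  \<open>eq_iff_add_eq_0\<close>, normalising, and cancelling the even coefficients with \<open>even_numeral_eq_0\<close>.\<close>

lemmas add_self_eq_0 = CHAR_2_add_self[OF CHAR_eq_2]
lemmas eq_iff_add_eq_0 = CHAR_2_eq_iff_add_eq_0[OF CHAR_eq_2]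
lemmas even_numeral_eq_0 = CHAR_2_numeral_Bit0[OF CHAR_eq_2]

lemma frobenius_add: "((x :: 'a) + y) ^ q = x ^ q + y ^ q"
  using CHAR_2_add_power_2_power[OF CHAR_eq_2] q_def by simp

lemma frobenius_involution: "((x :: 'a) ^ q) ^ q = x"
proof -
  have "(x ^ q) ^ q = x ^ (q ^ 2)"
    by (simp add: power2_eq_square power_mult)
  then show ?thesis
    using finite_field_power_card[of x] card_field by simp
qed

lemma frobenius_trace_fixed: "((\<beta> :: 'a) ^ q + \<beta>) ^ q = \<beta> ^ q + \<beta>"
  by (simp add: frobenius_add frobenius_involution add.commute)

lemma frobenius_trace_nonzero: "(\<beta> :: 'a) ^ q \<noteq> \<beta> \<Longrightarrow> \<beta> ^ q + \<beta> \<noteq> 0"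
  using eq_iff_add_eq_0 by blast

lemma frobenius_fixed_if_square_fixed:
  assumes "((t :: 'a) ^ 2) ^ q = t ^ 2"
  shows "t ^ q = t"
proof -
  have "(t ^ q + t) ^ 2 = (t ^ 2) ^ q + t ^ 2"
    using CHAR_2_add_power_2_power[OF CHAR_eq_2, of "t ^ q" t 1] by (simp add: power2_power_commute)
  then have "(t ^ q + t) ^ 2 = 0"
    using assms add_self_eq_0 by simp
  then show ?thesis
    using eq_iff_add_eq_0 by simp
qed

lemma bm_form_anisotropic:
  fixes \<alpha> \<beta> w :: 'a
  assumes \<beta>: "\<beta> ^ q \<noteq> \<beta>" and trace: "abs_trace h (\<alpha> ^ (q + 1) / (\<beta> ^ q + \<beta>) ^ 2) = 0"
    and w: "w \<noteq> 0"
  shows "bm_form q \<alpha> (\<beta> ^ q + \<beta>) w \<noteq> 0"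
proof
  assume zero: "bm_form q \<alpha> (\<beta> ^ q + \<beta>) w = 0"
  define \<delta> where "\<delta> = \<beta> ^ q + \<beta>"
  define W where "W = w ^ q"
  have \<delta>: "\<delta> \<noteq> 0" "\<delta> ^ q = \<delta>"
    unfolding \<delta>_def using frobenius_trace_nonzero[OF \<beta>] frobenius_trace_fixed by auto
  have W: "W \<noteq> 0" "W ^ q = w"
    unfolding W_def using w q_pos frobenius_involution by auto
  have sum: "\<alpha> * w ^ 2 + \<alpha> ^ q * W ^ 2 = \<delta> * (w * W)"
    by (rule eq_iff_add_eq_0[THEN iffD2]) (use zero in \<open>simp add: bm_form_def W_def \<delta>_def\<close>)
  txt \<open>\<open>\<zeta>\<close> is a root of \<open>X\<^sup>2 + X + \<alpha>\<^sup>q\<^sup>+\<^sup>1/\<delta>\<^sup>2\<close> with \<open>\<zeta>\<^sup>q + \<zeta> = 1\<close>,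
    so the trace of \<open>\<alpha>\<^sup>q\<^sup>+\<^sup>1/\<delta>\<^sup>2\<close> telescopes to \<open>1\<close>.\<close>
  define \<zeta> where "\<zeta> = \<alpha> * w ^ 2 / (\<delta> * (w * W))"
  have \<zeta>q: "\<zeta> ^ q = \<alpha> ^ q * W ^ 2 / (\<delta> * (w * W))"
    unfolding \<zeta>_def using \<delta> W
    by (simp add: power_divide power_mult_distrib power2_power_commute flip: W_def)
  have \<zeta>_sum: "\<zeta> + \<zeta> ^ q = 1"
    unfolding \<zeta>q unfolding \<zeta>_def using sum \<delta> w W by (simp add: add_divide_distrib[symmetric])
  have "\<zeta> ^ q = (\<zeta> + \<zeta>) + \<zeta> ^ q"
    by (simp add: add_self_eq_0)
  also have "\<dots> = \<zeta> + 1"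
    using \<zeta>_sum by (simp add: ac_simps)
  finally have "\<zeta> ^ q = \<zeta> + 1" .
  moreover have "\<zeta> * \<zeta> ^ q = \<alpha> ^ (q + 1) / \<delta> ^ 2"
    unfolding \<zeta>q unfolding \<zeta>_def using \<delta> w W by (simp add: field_simps power2_eq_square)
  ultimately have "\<zeta> ^ 2 + \<zeta> = \<alpha> ^ (q + 1) / \<delta> ^ 2"
    by (simp add: algebra_simps power2_eq_square)
  then have "abs_trace h (\<alpha> ^ (q + 1) / \<delta> ^ 2) = \<zeta> ^ q + \<zeta>"
    unfolding abs_trace_def using CHAR_2_trace_telescope[OF CHAR_eq_2, of \<zeta> h] q_def by simp
  then show False
    using trace \<zeta>_sum unfolding \<delta>_def by (simp add: add.commute)
qed

lemma bm_form_frobenius_fixed: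
  assumes "(\<delta> :: 'a) ^ q = \<delta>"
  shows "bm_form q \<alpha> \<delta> u ^ q = bm_form q \<alpha> \<delta> u"
  unfolding bm_form_def using assms
  by (simp add: frobenius_add power_mult_distrib power2_power_commute frobenius_involution ac_simps)

lemma bm_form_scale_subfield:
  assumes "(t :: 'a) ^ q = t"
  shows "bm_form q \<alpha> \<delta> (t * u) = t ^ 2 * bm_form q \<alpha> \<delta> u"
  unfolding bm_form_def using assms
  by (simp add: power_mult_distrib algebra_simps power2_eq_square)

section \<open>Feet of tangents\<close>

lemma BM_set_graph_mem_iff:
  fixes x m c :: 'a
  shows "proj_pt (x, m * x + c, 1) \<in> BM_set q \<alpha> \<beta> \<longleftrightarrow> bm_offset q \<alpha> \<beta> m c x \<in> subfield_q q"
  unfolding BM_set_affine_mem_iff bm_offset_def minus_CHAR_2[OF CHAR_eq_2] by simp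

lemma bm_offset_shift:
  fixes \<alpha> \<beta> m c x0 z :: 'a
  shows "bm_offset q \<alpha> \<beta> m c (x0 + z) + bm_offset q \<alpha> \<beta> m c (x0 + z) ^ q
    = (bm_offset q \<alpha> \<beta> m c x0 + bm_offset q \<alpha> \<beta> m c x0 ^ q) + bm_form q \<alpha> (\<beta> ^ q + \<beta>) z
      + ((m + (\<beta> ^ q + \<beta>) * x0 ^ q) * z + ((m + (\<beta> ^ q + \<beta>) * x0 ^ q) * z) ^ q)"
proof -
  have offset_q: "bm_offset q \<alpha> \<beta> m c y ^ q
      = m ^ q * y ^ q + c ^ q + \<alpha> ^ q * (y ^ q) ^ 2 + \<beta> ^ q * (y ^ q * y)" for y
    unfolding bm_offset_def
    by (simp add: frobenius_add power_mult_distrib power2_power_commute frobenius_involution)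
  have slope_q: "((m + (\<beta> ^ q + \<beta>) * x0 ^ q) * z) ^ q = (m ^ q + (\<beta> ^ q + \<beta>) * x0) * z ^ q"
    by (simp add: frobenius_add power_mult_distrib frobenius_involution frobenius_trace_fixed)
  show ?thesis
    unfolding offset_q slope_q unfolding bm_offset_def bm_form_def frobenius_add
    by (subst eq_iff_add_eq_0) (simp add: algebra_simps power2_eq_square even_numeral_eq_0)
qed

lemma tangent_slope:
  fixes \<alpha> \<beta> m c x0 :: 'a
  assumes \<beta>: "\<beta> ^ q \<noteq> \<beta>"
    and aniso: "\<And>w. w \<noteq> 0 \<Longrightarrow> bm_form q \<alpha> (\<beta> ^ q + \<beta>) w \<noteq> 0"
    and unique: "\<And>x. bm_offset q \<alpha> \<beta> m c x \<in> subfield_q q \<longleftrightarrow> x = x0"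
  shows "m = (\<beta> ^ q + \<beta>) * x0 ^ q"
proof (rule ccontr)
  define \<delta> where "\<delta> = \<beta> ^ q + \<beta>"
  define G where "G = bm_offset q \<alpha> \<beta> m c"
  define e where "e = m + \<delta> * x0 ^ q"
  assume "m \<noteq> (\<beta> ^ q + \<beta>) * x0 ^ q"
  then have e: "e \<noteq> 0"
    unfolding e_def \<delta>_def using eq_iff_add_eq_0 by blast
  have \<delta>: "\<delta> \<noteq> 0" "\<delta> ^ q = \<delta>"
    unfolding \<delta>_def using frobenius_trace_nonzero[OF \<beta>] frobenius_trace_fixed by auto
  have "\<beta> \<noteq> 0"
    using \<beta> q_pos by auto
  have G_fixed: "G x ^ q = G x \<longleftrightarrow> x = x0" for x
    using unique unfolding G_def subfield_q_def by blast
  note shift = bm_offset_shift[of \<alpha> \<beta> m c x0, folded G_def \<delta>_def e_def]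
  txt \<open>Moving from \<open>x0\<close> in the direction \<open>w = \<beta>/e\<close> by the step \<open>t \<in> GF(q)\<close> chosen below
    produces a second solution of \<open>G x \<in> GF(q)\<close>.\<close>
  define w where "w = \<beta> / e"
  define t where "t = \<delta> / bm_form q \<alpha> \<delta> w"
  have w: "w \<noteq> 0" "e * w = \<beta>"
    unfolding w_def using e \<open>\<beta> \<noteq> 0\<close> by auto
  have Q: "bm_form q \<alpha> \<delta> w \<noteq> 0"
    using aniso[OF w(1)] unfolding \<delta>_def .
  have "e ^ q * w ^ q = \<beta> ^ q"
    using w(2) by (metis power_mult_distrib)
  have t: "t ^ q = t" "t \<noteq> 0" "t * bm_form q \<alpha> \<delta> w = \<delta>"
    unfolding t_def using \<delta> Q bm_form_frobenius_fixed[OF \<delta>(2)] by (auto simp: power_divide)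
  have "G (x0 + t * w) + G (x0 + t * w) ^ q = t * \<delta> + t * (\<beta> + \<beta> ^ q)"
    unfolding shift bm_form_scale_subfield[OF t(1)]
    using G_fixed[of x0] t w \<open>e ^ q * w ^ q = \<beta> ^ q\<close>
    by (simp add: add_self_eq_0 power_mult_distrib algebra_simps power2_eq_square)
  also have "\<dots> = 0"
    unfolding \<delta>_def by (simp add: add.commute add_self_eq_0 flip: distrib_left)
  finally have "x0 + t * w = x0"
    using G_fixed eq_iff_add_eq_0 by (metis add.commute)
  then show False
    using t(2) w(1) by simp
qed

lemma tangent_foot:
  fixes \<alpha> \<beta> m c a b x0 :: 'a
  defines "\<delta> \<equiv> \<beta> ^ q + \<beta>"
  assumes slope: "m = \<delta> * x0 ^ q" and P: "b = m * a + c"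
    and r: "bm_offset q \<alpha> \<beta> m c x0 \<in> subfield_q q"
  shows "proj_pt (x0, m * x0 + c, 1) = foot_pt q \<delta> a b (x0 + a)"
    and "bm_form q \<alpha> \<delta> (x0 + a) = bm_form q \<alpha> \<delta> a + b + b ^ q"
proof -
  have c: "c = b + m * a"
    using P eq_iff_add_eq_0 by (metis add.assoc add.commute add_self_eq_0 add_0)
  have \<delta>q: "\<delta> ^ q = \<delta>"
    unfolding \<delta>_def by (rule frobenius_trace_fixed)
  have "a + (x0 + a) = x0" "b + \<delta> * a ^ q * (x0 + a) + \<delta> * ((x0 + a) * (x0 + a) ^ q) = m * x0 + c"
    unfolding c slope frobenius_add
    by (subst eq_iff_add_eq_0, simp add: algebra_simps even_numeral_eq_0)+
  then show "proj_pt (x0, m * x0 + c, 1) = foot_pt q \<delta> a b (x0 + a)"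
    unfolding foot_pt_def by (simp only:)
  define R where "R = bm_offset q \<alpha> \<beta> m c x0"
  have "R ^ q = R"
    using r unfolding R_def subfield_q_def by simp
  then have "R + R ^ q = 0"
    by (simp only: add_self_eq_0)
  moreover have "bm_form q \<alpha> \<delta> (x0 + a) + (bm_form q \<alpha> \<delta> a + b + b ^ q) = R + R ^ q"
    unfolding R_def bm_offset_def c slope bm_form_def
    using \<delta>q by (simp add: frobenius_add power_mult_distrib power2_power_commute frobenius_involution)
      (subst eq_iff_add_eq_0, simp add: \<delta>_def algebra_simps power2_eq_square even_numeral_eq_0)
  ultimately have "bm_form q \<alpha> \<delta> (x0 + a) + (bm_form q \<alpha> \<delta> a + b + b ^ q) = 0"
    by (simp only:)
  then show "bm_form q \<alpha> \<delta> (x0 + a) = bm_form q \<alpha> \<delta> a + b + b ^ q"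
    by (rule eq_iff_add_eq_0[THEN iffD2])
qed

lemma pedal_BM_subset_feet:
  fixes \<alpha> \<beta> a b :: 'a
  assumes \<beta>: "\<beta> ^ q \<noteq> \<beta>"
    and aniso: "\<And>w. w \<noteq> 0 \<Longrightarrow> bm_form q \<alpha> (\<beta> ^ q + \<beta>) w \<noteq> 0"
  shows "pedal (BM_set q \<alpha> \<beta>) (proj_pt (a, b, 1)) \<subseteq> foot_pt q (\<beta> ^ q + \<beta>) a b `
    {u. bm_form q \<alpha> (\<beta> ^ q + \<beta>) u = bm_form q \<alpha> (\<beta> ^ q + \<beta>) a + b + b ^ q}"
proof
  fix Q assume "Q \<in> pedal (BM_set q \<alpha> \<beta>) (proj_pt (a, b, 1))"
  then obtain L where L: "L \<in> lines" "proj_pt (a, b, 1) \<in> L" "L \<inter> BM_set q \<alpha> \<beta> = {Q}"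
    unfolding pedal_def by blast
  have not_vertical: "proj_pt (0, 1, 0) \<notin> L"
    using BM_tangent_not_vertical[OF q_pos L] .
  obtain m c where graph: "\<And>x y. proj_pt (x, y, 1) \<in> L \<longleftrightarrow> y = m * x + c"
    using nonvertical_line_graph[OF L(1) not_vertical] by blast
  note BM_iff = BM_set_graph_mem_iff[of _ m c]
  have "Q \<in> BM_set q \<alpha> \<beta>" "Q \<in> L"
    using L(3) by auto
  moreover have "Q \<noteq> proj_pt (0, 1, 0)"
    using not_vertical \<open>Q \<in> L\<close> by auto
  ultimately obtain x0 y0 where Q: "Q = proj_pt (x0, y0, 1)"
    unfolding BM_set_def by blast
  then have y0: "y0 = m * x0 + c"
    using \<open>Q \<in> L\<close> graph by simp
  have unique: "bm_offset q \<alpha> \<beta> m c x \<in> subfield_q q \<longleftrightarrow> x = x0" for x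
  proof
    assume "bm_offset q \<alpha> \<beta> m c x \<in> subfield_q q"
    then have "proj_pt (x, m * x + c, 1) \<in> L \<inter> BM_set q \<alpha> \<beta>"
      using graph BM_iff by simp
    then show "x = x0"
      using L(3) unfolding Q y0 by (simp add: proj_pt_affine_eq_iff)
  next
    assume "x = x0"
    then show "bm_offset q \<alpha> \<beta> m c x \<in> subfield_q q"
      using BM_iff \<open>Q \<in> BM_set q \<alpha> \<beta>\<close> unfolding Q y0 by simp
  qed
  have "b = m * a + c"
    using L(2) graph by simp
  from tangent_foot[OF tangent_slope[OF \<beta> aniso unique] this unique[of x0, THEN iffD2, OF refl]]
  show "Q \<in> foot_pt q (\<beta> ^ q + \<beta>) a b `
    {u. bm_form q \<alpha> (\<beta> ^ q + \<beta>) u = bm_form q \<alpha> (\<beta> ^ q + \<beta>) a + b + b ^ q}"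
    unfolding Q y0 by blast
qed

section \<open>No three feet are collinear\<close>

lemma alpha_square_diff_fixed:
  fixes \<alpha> \<delta> u v :: 'a
  assumes "bm_form q \<alpha> \<delta> v = bm_form q \<alpha> \<delta> u" "\<delta> * (v * v ^ q) = \<delta> * (u * u ^ q)"
  shows "(\<alpha> * (v + u) ^ 2) ^ q = \<alpha> * (v + u) ^ 2"
proof (rule eq_iff_add_eq_0[THEN iffD2])
  have "\<alpha> * v ^ 2 + \<alpha> ^ q * (v ^ q) ^ 2 = \<alpha> * u ^ 2 + \<alpha> ^ q * (u ^ q) ^ 2"
    using assms unfolding bm_form_def by (metis add_right_cancel)
  moreover have "(\<alpha> * (v + u) ^ 2) ^ q + \<alpha> * (v + u) ^ 2
      = (\<alpha> * v ^ 2 + \<alpha> ^ q * (v ^ q) ^ 2) + (\<alpha> * u ^ 2 + \<alpha> ^ q * (u ^ q) ^ 2)"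
    by (simp add: power_mult_distrib power2_power_commute frobenius_add)
      (subst eq_iff_add_eq_0, simp add: algebra_simps power2_eq_square even_numeral_eq_0)
  ultimately show "(\<alpha> * (v + u) ^ 2) ^ q + \<alpha> * (v + u) ^ 2 = 0"
    by (simp only: add_self_eq_0)
qed

lemma collinear_feet_params_ratio:
  fixes \<delta> \<alpha> s k K u1 u2 u3 :: 'a
  assumes \<delta>: "\<delta> \<noteq> 0" "\<delta> ^ q = \<delta>" and \<alpha>: "\<alpha> \<noteq> 0"
    and line: "\<And>u. u \<in> {u1, u2, u3} \<Longrightarrow> \<delta> * (u * u ^ q) + s * u + k = 0"
    and form: "\<And>u. u \<in> {u1, u2, u3} \<Longrightarrow> bm_form q \<alpha> \<delta> u = K"
    and "u1 \<noteq> u2"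
  obtains t where "t ^ q = t" "u3 + u1 = t * (u2 + u1)"
proof -
  define N where "N u = \<delta> * (u * u ^ q)" for u
  have N_fixed: "N u ^ q = N u" for u
    unfolding N_def using \<delta> by (simp add: power_mult_distrib frobenius_involution mult.commute)
  have d: "u2 + u1 \<noteq> 0"
    using \<open>u1 \<noteq> u2\<close> eq_iff_add_eq_0 by (metis add.commute)
  have N_diff: "N v + N u1 = s * (v + u1)" if "v \<in> {u1, u2, u3}" for v
  proof (rule eq_iff_add_eq_0[THEN iffD2])
    have "N v + N u1 + s * (v + u1) = (N v + s * v + k) + (N u1 + s * u1 + k)"
      by (subst eq_iff_add_eq_0) (simp add: algebra_simps even_numeral_eq_0)
    then show "N v + N u1 + s * (v + u1) = 0"
      using line[OF that] line[of u1] unfolding N_def by simp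
  qed
  txt \<open>For \<open>s \<noteq> 0\<close> the ratio is a quotient of norm differences, which lie in \<open>GF(q)\<close>; for
    \<open>s = 0\<close> all norms agree, and then so do the \<open>\<alpha>\<close>-parts of the form.\<close>
  show thesis
  proof (cases "s = 0")
    case False
    define n2 where "n2 = N u2 + N u1"
    define n3 where "n3 = N u3 + N u1"
    have n: "n2 = s * (u2 + u1)" "n3 = s * (u3 + u1)"
      unfolding n2_def n3_def using N_diff by auto
    show thesis
    proof (rule that[of "n3 / n2"])
      show "(n3 / n2) ^ q = n3 / n2"
        unfolding n2_def n3_def by (simp add: power_divide frobenius_add N_fixed)
      have "n3 / n2 = (u3 + u1) / (u2 + u1)"
        unfolding n using False by simp
      then show "u3 + u1 = n3 / n2 * (u2 + u1)"
        using d by simp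
    qed
  next
    case True
    have sq_fixed: "(\<alpha> * (v + u1) ^ 2) ^ q = \<alpha> * (v + u1) ^ 2" if v: "v \<in> {u1, u2, u3}" for v
    proof (rule alpha_square_diff_fixed)
      show "bm_form q \<alpha> \<delta> v = bm_form q \<alpha> \<delta> u1"
        using form[OF v] form[of u1] by simp
      show "\<delta> * (v * v ^ q) = \<delta> * (u1 * u1 ^ q)"
        using N_diff[OF v] True eq_iff_add_eq_0 unfolding N_def by simp
    qed
    define t where "t = (u3 + u1) / (u2 + u1)"
    have t2: "t ^ 2 = (\<alpha> * (u3 + u1) ^ 2) / (\<alpha> * (u2 + u1) ^ 2)"
      unfolding t_def using \<alpha> d by (simp add: power_divide)
    have "(t ^ 2) ^ q = t ^ 2"
      unfolding t2 power_divide using sq_fixed[of u2] sq_fixed[of u3] by simp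
    then have "t ^ q = t"
      by (rule frobenius_fixed_if_square_fixed)
    moreover have "u3 + u1 = t * (u2 + u1)"
      unfolding t_def using d by simp
    ultimately show thesis
      by (rule that)
  qed
qed

lemma no_three_collinear_feet_params:
  fixes \<delta> \<alpha> s k K u1 u2 u3 :: 'a
  assumes \<delta>: "\<delta> \<noteq> 0" "\<delta> ^ q = \<delta>" and \<alpha>: "\<alpha> \<noteq> 0"
    and line: "\<And>u. u \<in> {u1, u2, u3} \<Longrightarrow> \<delta> * (u * u ^ q) + s * u + k = 0"
    and form: "\<And>u. u \<in> {u1, u2, u3} \<Longrightarrow> bm_form q \<alpha> \<delta> u = K"
    and distinct: "u1 \<noteq> u2" "u1 \<noteq> u3" "u2 \<noteq> u3"
  shows False
proof -
  obtain t where t: "t ^ q = t" "u3 + u1 = t * (u2 + u1)"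
    using collinear_feet_params_ratio[OF \<delta> \<alpha> line form distinct(1)] by blast
  define d where "d = u2 + u1"
  have d: "d \<noteq> 0" "d ^ q \<noteq> 0"
    unfolding d_def using distinct(1) eq_iff_add_eq_0 q_pos by (auto simp: add.commute)
  have "u2 = (u2 + u1) + u1" "u3 = (u3 + u1) + u1"
    by (simp_all add: add.assoc add_self_eq_0)
  then have u: "u2 = u1 + d" "u3 = u1 + t * d"
    unfolding t(2) d_def[symmetric] by (simp_all only: add.commute)
  define E where "E u = \<delta> * (u * u ^ q) + s * u + k" for u
  txt \<open>Along the \<open>GF(q)\<close>-line \<open>u1 + GF(q) d\<close> the equation of the line is a quadratic in \<open>t\<close>
    vanishing at \<open>t = 0, 1\<close>.\<close>
  have "E u1 = 0" "E (u1 + d) = 0" "E (u1 + t * d) = 0"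
    using line[of u1] line[of u2] line[of u3] u unfolding E_def by simp_all
  moreover have "E (u1 + t * d) + t * E (u1 + d) + (1 + t) * E u1 = \<delta> * (d * d ^ q) * (t * t + t)"
    unfolding E_def frobenius_add power_mult_distrib t(1)
    by (subst eq_iff_add_eq_0) (simp add: algebra_simps even_numeral_eq_0)
  ultimately have "\<delta> * (d * d ^ q) * (t * (t + 1)) = 0"
    by (simp add: algebra_simps)
  then have "t = 0 \<or> t = 1"
    using \<delta> d eq_iff_add_eq_0[of t 1] by auto
  then show False
    using u distinct d by auto
qed

lemma no_three_collinear_feet:
  fixes \<delta> \<alpha> a b K u1 u2 u3 :: 'a
  assumes \<delta>: "\<delta> \<noteq> 0" "\<delta> ^ q = \<delta>" and \<alpha>: "\<alpha> \<noteq> 0" and L: "L \<in> lines"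
    and on_L: "\<And>u. u \<in> {u1, u2, u3} \<Longrightarrow> foot_pt q \<delta> a b u \<in> L"
    and form: "\<And>u. u \<in> {u1, u2, u3} \<Longrightarrow> bm_form q \<alpha> \<delta> u = K"
    and distinct: "u1 \<noteq> u2" "u1 \<noteq> u3" "u2 \<noteq> u3"
  shows False
proof -
  obtain l1 l2 l3 where l: "L = proj_line (l1, l2, l3)" "(l1, l2, l3) \<noteq> (0, 0, 0)"
    using L unfolding lines_def by auto
  show False
  proof (cases "l2 = 0")
    case True
    then have "l1 * (a + u) + l3 = 0" if "u \<in> {u1, u2, u3}" for u
      using on_L[OF that] unfolding l(1) foot_pt_in_proj_line_iff by simp
    then have on: "l1 * (a + u1) + l3 = 0" "l1 * (a + u2) + l3 = 0"
      by simp_all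
    then have "l1 * (a + u1) = l1 * (a + u2)"
      by (metis add_right_cancel)
    then have "l1 = 0"
      using distinct(1) by simp
    then show False
      using on True l(2) by simp
  next
    case False
    then show False
      using no_three_collinear_feet_params[OF \<delta> \<alpha> _ form distinct] on_L
      unfolding l(1) foot_pt_in_nonvertical_line_iff[OF False] by blast
  qed
qed

lemma foot_pt_arc:
  fixes \<delta> \<alpha> a b K :: 'a
  assumes \<delta>: "\<delta> \<noteq> 0" "\<delta> ^ q = \<delta>" and \<alpha>: "\<alpha> \<noteq> 0"
  shows "is_arc (foot_pt q \<delta> a b ` {u. bm_form q \<alpha> \<delta> u = K})"
  unfolding is_arc_def
proof (intro conjI ballI)
  define S where "S = foot_pt q \<delta> a b ` {u. bm_form q \<alpha> \<delta> u = K}"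
  show "foot_pt q \<delta> a b ` {u. bm_form q \<alpha> \<delta> u = K} \<subseteq> points"
    unfolding foot_pt_def by (auto intro: proj_pt_in_points)
  fix L :: "'a vec3 set set" assume L: "L \<in> lines"
  show "card (L \<inter> foot_pt q \<delta> a b ` {u. bm_form q \<alpha> \<delta> u = K}) \<le> 2"
  proof (rule ccontr)
    assume "\<not> ?thesis"
    then have "3 \<le> card (L \<inter> S)"
      unfolding S_def by simp
    then obtain T where T: "T \<subseteq> L \<inter> S" "card T = 3"
      by (rule obtain_subset_with_card_n)
    then obtain Y1 Y2 Y3 where Y: "T = {Y1, Y2, Y3}" "Y1 \<noteq> Y2" "Y2 \<noteq> Y3" "Y1 \<noteq> Y3"
      unfolding card_3_iff by blast
    have "\<exists>u. Y = foot_pt q \<delta> a b u \<and> bm_form q \<alpha> \<delta> u = K" if "Y \<in> T" for Y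
      using that T(1) unfolding S_def by blast
    then obtain u1 u2 u3 where u: "Y1 = foot_pt q \<delta> a b u1" "Y2 = foot_pt q \<delta> a b u2"
        "Y3 = foot_pt q \<delta> a b u3"
      and form: "\<And>u. u \<in> {u1, u2, u3} \<Longrightarrow> bm_form q \<alpha> \<delta> u = K"
      unfolding Y(1) by (metis empty_iff insert_iff)
    have "foot_pt q \<delta> a b u \<in> L" if "u \<in> {u1, u2, u3}" for u
      using that T(1) u unfolding Y(1) by auto
    moreover have "u1 \<noteq> u2" "u1 \<noteq> u3" "u2 \<noteq> u3"
      using Y(2-4) u by auto
    ultimately show False
      using no_three_collinear_feet[OF \<delta> \<alpha> L _ form] by blast
  qed
qed

section \<open>A Baer pencil through the feet\<close>

lemma feet_on_inf_baer_pencil: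
  fixes \<delta> a b :: 'a
  assumes \<delta>: "\<delta> \<noteq> 0" "\<delta> ^ q = \<delta>"
  shows "on_inf_baer_pencil q (range (foot_pt q \<delta> a b))"
proof -
  obtain B where B: "baer_subline q B" "proj_pt (0, 1, 0) \<in> B"
    and B_affine: "\<And>t. t \<in> subfield_q q \<Longrightarrow> proj_pt (0, b + \<delta> * t, 1) \<in> B"
    using baer_subline_on_y_axis[OF q_pos \<delta>(1)] by blast
  have "proj_pt (0, b, 1) \<in> B"
    using B_affine[of 0] q_pos by (simp add: subfield_q_def)
  define V where "V = proj_pt (1, \<delta> * a ^ q, 0)"
  define Ls where "Ls = {L \<in> lines. V \<in> L \<and> (\<exists>Y\<in>B. Y \<in> L)}"
  have "V \<in> line_inf" "V \<in> points"
    unfolding V_def line_inf_def by (simp_all add: proj_pt_in_proj_line_iff proj_pt_in_points)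
  moreover have "V \<notin> m" if "m \<in> lines" "B \<subseteq> m" for m
    using line_through_y_axis_points_x_eq_0[OF that(1), of b 1 "\<delta> * a ^ q" 0] that(2) B(2)
      \<open>proj_pt (0, b, 1) \<in> B\<close>
    unfolding V_def by auto
  moreover have "foot_pt q \<delta> a b u \<in> \<Union>Ls" for u
  proof -
    define t where "t = a ^ q * a + u * u ^ q"
    define L where "L = proj_line (\<delta> * a ^ q, 1, b + \<delta> * t)"
    have "t \<in> subfield_q q"
      unfolding t_def subfield_q_def
      by (simp add: frobenius_add power_mult_distrib frobenius_involution mult.commute)
    then have "proj_pt (0, b + \<delta> * t, 1) \<in> B \<inter> L"
      using B_affine unfolding L_def by (simp add: proj_pt_in_proj_line_iff add_self_eq_0)
    moreover have "V \<in> L"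
      unfolding V_def L_def by (simp add: proj_pt_in_proj_line_iff add_self_eq_0)
    moreover have "foot_pt q \<delta> a b u \<in> L"
      unfolding foot_pt_def L_def t_def
      by (simp add: proj_pt_in_proj_line_iff)
        (subst eq_iff_add_eq_0[symmetric], simp add: algebra_simps even_numeral_eq_0)
    moreover have "L \<in> lines"
      unfolding L_def lines_def by (intro CollectI exI[of _ "(\<delta> * a ^ q, 1, b + \<delta> * t)"]) simp
    ultimately show ?thesis
      unfolding Ls_def by blast
  qed
  ultimately have "baer_pencil q V Ls" "range (foot_pt q \<delta> a b) \<subseteq> \<Union>Ls"
    unfolding baer_pencil_def Ls_def using B(1) by auto
  then show ?thesis
    unfolding on_inf_baer_pencil_def using \<open>V \<in> line_inf\<close> by metis
qed

lemma pedal_BM_arc_on_inf_baer_pencil: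
  fixes \<alpha> \<beta> a b :: 'a
  assumes \<beta>: "\<beta> ^ q \<noteq> \<beta>" and \<alpha>: "\<alpha> \<noteq> 0"
    and trace: "abs_trace h (\<alpha> ^ (q + 1) / (\<beta> ^ q + \<beta>) ^ 2) = 0"
  shows "on_inf_baer_pencil q (pedal (BM_set q \<alpha> \<beta>) (proj_pt (a, b, 1)))"
    and "is_arc (pedal (BM_set q \<alpha> \<beta>) (proj_pt (a, b, 1)))"
proof -
  define \<delta> where "\<delta> = \<beta> ^ q + \<beta>"
  have \<delta>: "\<delta> \<noteq> 0" "\<delta> ^ q = \<delta>"
    unfolding \<delta>_def using frobenius_trace_nonzero[OF \<beta>] frobenius_trace_fixed by auto
  have feet: "pedal (BM_set q \<alpha> \<beta>) (proj_pt (a, b, 1))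
      \<subseteq> foot_pt q \<delta> a b ` {u. bm_form q \<alpha> \<delta> u = bm_form q \<alpha> \<delta> a + b + b ^ q}"
    unfolding \<delta>_def using pedal_BM_subset_feet[OF \<beta> bm_form_anisotropic[OF \<beta> trace]] .
  show "on_inf_baer_pencil q (pedal (BM_set q \<alpha> \<beta>) (proj_pt (a, b, 1)))"
  proof (rule on_inf_baer_pencil_subset[OF feet_on_inf_baer_pencil[OF \<delta>]])
    have "foot_pt q \<delta> a b ` {u. bm_form q \<alpha> \<delta> u = bm_form q \<alpha> \<delta> a + b + b ^ q}
        \<subseteq> range (foot_pt q \<delta> a b)"
      by (rule image_mono) simp
    with feet show "pedal (BM_set q \<alpha> \<beta>) (proj_pt (a, b, 1)) \<subseteq> range (foot_pt q \<delta> a b)"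
      by (rule order_trans)
  qed
  show "is_arc (pedal (BM_set q \<alpha> \<beta>) (proj_pt (a, b, 1)))"
    using is_arc_subset[OF foot_pt_arc[OF \<delta> \<alpha>] feet] .
qed

end

theorem theorem1p7:
  fixes U :: "('a::{field,finite}) vec3 set set" and P :: "'a vec3 set"
    and q h :: nat
  assumes "q = 2 ^ h" and "h \<ge> 1"
    and "card (UNIV :: 'a set) = q ^ 2"
    and "nonclassical_orth_BM_unital q h U"
    and "P \<in> points" and "P \<notin> U" and "P \<notin> line_inf"
  shows "(\<exists>V Ls. V \<in> line_inf \<and> baer_pencil q V Ls \<and> pedal U P \<subseteq> \<Union>Ls)
         \<and> is_arc (pedal U P)"
proof -
  obtain f \<alpha> \<beta> where f: "collineation f" "f ` line_inf = line_inf"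
    and \<beta>: "\<beta> \<notin> subfield_q q" and \<alpha>: "\<alpha> \<noteq> 0"
    and trace: "abs_trace h (\<alpha> ^ (q + 1) / (\<beta> ^ q + \<beta>) ^ 2) = 0" and U: "U = f ` BM_set q \<alpha> \<beta>"
    using assms(4) unfolding nonclassical_orth_BM_unital_def by blast
  obtain P0 where P0: "P0 \<in> points" "P = f P0"
    using assms(5) collineation_image_points[OF f(1)] by (metis imageE)
  moreover have "P0 \<notin> line_inf"
    using assms(7) f(2) P0(2) by (metis imageI)
  ultimately obtain a b where ab: "P0 = proj_pt (a, b, 1)"
    by (metis affine_point_cases)
  have pedal: "pedal U P \<subseteq> f ` pedal (BM_set q \<alpha> \<beta>) P0"
    unfolding U P0(2) by (rule pedal_collineation_image[OF f(1) BM_set_subset_points P0(1)])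
  have "\<beta> ^ q \<noteq> \<beta>"
    using \<beta> unfolding subfield_q_def by simp
  note BM_pedal = pedal_BM_arc_on_inf_baer_pencil[OF assms(1-3) this \<alpha> trace, where a = a and b = b,
      folded ab]
  have "on_inf_baer_pencil q (pedal U P)"
    using on_inf_baer_pencil_subset[OF on_inf_baer_pencil_collineation_image[OF f BM_pedal(1)] pedal] .
  moreover have "is_arc (pedal U P)"
    using is_arc_subset[OF is_arc_collineation_image[OF f(1) BM_pedal(2)] pedal] .
  ultimately show ?thesis
    unfolding on_inf_baer_pencil_def by blast
qed
end
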